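(* Let $T \ge 1$ and $m_u \ge 1$ be integers. Let $\mathscr V_0^*$ be a finite collection of pairwise disjoint intervals of the form $\mathcal V_0 = [(\underline v_{t|0})_{t=0}^{T-1}, (\bar v_{t|0})_{t=0}^{T-1}] \subset \mathbb R^{T m_u}$, with $\underline v_{t|0}, \bar v_{t|0} \in \{0,1\}^{m_u}$ and $\underline v_{t|0} \le \bar v_{t|0}$, whose union contains $\{0,1\}^{T m_u}$. Let $v_0 \in \{0,1\}^{m_u}$. Let $\mathscr V_1^0$ be the collection obtained as follows: for every $\mathcal V_0 \in \mathscr V_0^*$ satisfying $\underline v_{0|0} \le v_0 \le \bar v_{0|0}$, include the interval $$\mathcal V_1 := [(\underline v_{1|0}, \ldots, \underline v_{T-1|0}, 0, \ldots, 0), (\bar v_{1|0}, \ldots, \bar v_{T-1|0}, 1, \ldots, 1)],$$ where the trailing blocks of zeros and ones each have $m_u$ entries; intervals $\mathcal V_0$ not satisfying this condition are discarded. Then the union of the sets in $\mathscr V_1^0$ contains $\{0,1\}^{T m_u}$, and the sets in $\mathscr V_1^0$ are pairwise disjoint intervals.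
   Context: For $a, b \in \mathbb R^{N}$ with $a \le b$ componentwise, $[a,b]$ denotes the box $\{z \in \mathbb R^N : a \le z \le b\}$. A vector in $\mathbb R^{T m_u}$ is viewed as a concatenation $(v_0, \ldots, v_{T-1})$ of $T$ blocks $v_t \in \mathbb R^{m_u}$; inequalities between vectors are componentwise. *)

theory Defs
  imports Complex_Main "HOL-Library.Disjoint_Sets"
begin

text \<open>Vectors in R^N are real lists of length N. A vector in R^(T*mu) is the
concatenation of T blocks of length mu; block t occupies indices t*mu .. t*mu+mu-1.\<close>

definition box :: "real list \<Rightarrow> real list \<Rightarrow> real list set" where
  "box a b = {z. length z = length a \<and> (\<forall>i<length a. a ! i \<le> z ! i \<and> z ! i \<le> b ! i)}"

definition binary_cube :: "nat \<Rightarrow> real list set" where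
  "binary_cube N = {z. length z = N \<and> set z \<subseteq> {0, 1}}"

definition le_vec :: "real list \<Rightarrow> real list \<Rightarrow> bool" where
  "le_vec a b \<longleftrightarrow> length a = length b \<and> (\<forall>i<length a. a ! i \<le> b ! i)"

definition shift_lo :: "nat \<Rightarrow> real list \<Rightarrow> real list" where
  "shift_lo mu a = drop mu a @ replicate mu 0"

definition shift_hi :: "nat \<Rightarrow> real list \<Rightarrow> real list" where
  "shift_hi mu b = drop mu b @ replicate mu 1"

definition retained :: "nat \<Rightarrow> real list \<Rightarrow> (real list \<times> real list) set \<Rightarrow> (real list \<times> real list) set" where
  "retained mu v0 S = {(a, b) \<in> S. \<forall>j<mu. a ! j \<le> v0 ! j \<and> v0 ! j \<le> b ! j}"

end

theory Submission
  imports Defs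
begin

text \<open>Split a binary point of length T*mu as y @ u, with u its last block. The binary point
v0 @ y lies in some box [a, b] of the family; that box is retained because its first
block contains v0, and y lies in [drop mu a, drop mu b]. As the appended block [0, 1]^mu
contains every binary u, the point y @ u lies in the shifted box of [a, b]. Conversely, a
point y @ u of two shifted boxes yields the point v0 @ y of two distinct original boxes.\<close>

lemma le_vec_eq_list_all2: "le_vec = list_all2 (\<le>)"
  by (auto simp: fun_eq_iff le_vec_def list_all2_conv_all_nth)

lemma mem_box_iff_list_all2:
  "length b = length a \<Longrightarrow> z \<in> box a b \<longleftrightarrow> list_all2 (\<le>) a z \<and> list_all2 (\<le>) z b"
  unfolding box_def list_all2_conv_all_nth by (simp add: all_conj_distrib) metis

lemma mem_box_append_iff:
  assumes "length b1 = length a1" and "length b2 = length a2"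
  shows "z \<in> box (a1 @ a2) (b1 @ b2) \<longleftrightarrow>
    (\<exists>x y. z = x @ y \<and> x \<in> box a1 b1 \<and> y \<in> box a2 b2)"
proof
  assume "z \<in> box (a1 @ a2) (b1 @ b2)"
  then have lo: "list_all2 (\<le>) (a1 @ a2) z" and hi: "list_all2 (\<le>) z (b1 @ b2)"
    using assms by (simp_all add: mem_box_iff_list_all2)
  from lo obtain x y where "z = x @ y" "length x = length a1"
    "list_all2 (\<le>) a1 x" "list_all2 (\<le>) a2 y"
    by (auto simp: list_all2_append1)
  with hi assms show "\<exists>x y. z = x @ y \<and> x \<in> box a1 b1 \<and> y \<in> box a2 b2"
    by (auto simp: mem_box_iff_list_all2 list_all2_append)
next
  assume "\<exists>x y. z = x @ y \<and> x \<in> box a1 b1 \<and> y \<in> box a2 b2"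
  with assms show "z \<in> box (a1 @ a2) (b1 @ b2)"
    by (auto simp: mem_box_iff_list_all2 intro: list_all2_appendI)
qed

lemma append_mem_box_iff:
  assumes "length b = length a" and "length v = mu" and "mu \<le> length a"
  shows "v @ y \<in> box a b \<longleftrightarrow> v \<in> box (take mu a) (take mu b) \<and> y \<in> box (drop mu a) (drop mu b)"
proof -
  have "v @ y \<in> box a b \<longleftrightarrow> v @ y \<in> box (take mu a @ drop mu a) (take mu b @ drop mu b)"
    by simp
  also have "\<dots> \<longleftrightarrow> (\<exists>x y'. v @ y = x @ y' \<and> x \<in> box (take mu a) (take mu b) \<and>
      y' \<in> box (drop mu a) (drop mu b))"
    using assms by (intro mem_box_append_iff) simp_all
  also have "\<dots> \<longleftrightarrow> v \<in> box (take mu a) (take mu b) \<and> y \<in> box (drop mu a) (drop mu b)"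
    using assms by (auto simp: box_def append_eq_append_conv)
  finally show ?thesis .
qed

lemma mem_box_shift_iff:
  assumes "length b = length a" and "mu \<le> length a"
  shows "z \<in> box (shift_lo mu a) (shift_hi mu b) \<longleftrightarrow>
    (\<exists>y u. z = y @ u \<and> y \<in> box (drop mu a) (drop mu b) \<and>
      u \<in> box (replicate mu 0) (replicate mu 1))"
  unfolding shift_lo_def shift_hi_def using assms by (intro mem_box_append_iff) simp_all

lemma binary_cube_subset_box: "binary_cube n \<subseteq> box (replicate n 0) (replicate n 1)"
  by (auto simp: box_def binary_cube_def dest!: nth_mem)

lemma binary_cube_add:
  "binary_cube (m + n) = {y @ u | y u. y \<in> binary_cube m \<and> u \<in> binary_cube n}"
proof (intro set_eqI iffI)
  fix z assume "z \<in> binary_cube (m + n)"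
  then have "z = take m z @ drop m z" "take m z \<in> binary_cube m" "drop m z \<in> binary_cube n"
    by (auto simp: binary_cube_def dest: in_set_takeD in_set_dropD)
  then show "z \<in> {y @ u | y u. y \<in> binary_cube m \<and> u \<in> binary_cube n}" by blast
qed (auto simp: binary_cube_def)

lemma append_mem_box_iff_retained:
  assumes "(a, b) \<in> S" and "length a = N" and "length b = N" and "mu \<le> N"
    and "length v0 = mu"
  shows "v0 @ y \<in> box a b \<longleftrightarrow> (a, b) \<in> retained mu v0 S \<and> y \<in> box (drop mu a) (drop mu b)"
proof -
  have "(a, b) \<in> retained mu v0 S \<longleftrightarrow> v0 \<in> box (take mu a) (take mu b)"
    using assms by (auto simp: retained_def box_def)
  then show ?thesis
    using assms by (simp add: append_mem_box_iff)
qed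

lemma binary_cube_subset_UN_retained_shift:
  assumes len: "\<forall>(a, b) \<in> S. length a = N \<and> length b = N" and "mu \<le> N"
    and cover: "binary_cube N \<subseteq> (\<Union>(a, b) \<in> S. box a b)"
    and v0: "v0 \<in> binary_cube mu"
  shows "binary_cube N \<subseteq> (\<Union>(a, b) \<in> retained mu v0 S. box (shift_lo mu a) (shift_hi mu b))"
proof
  fix z assume "z \<in> binary_cube N"
  then obtain y u where z: "z = y @ u" and y: "y \<in> binary_cube (N - mu)"
    and u: "u \<in> binary_cube mu"
    using binary_cube_add[of "N - mu" mu] \<open>mu \<le> N\<close> by auto
  have "v0 @ y \<in> binary_cube N"
    using binary_cube_add[of mu "N - mu"] v0 y \<open>mu \<le> N\<close> by auto
  then obtain a b where ab: "(a, b) \<in> S" "v0 @ y \<in> box a b"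
    using cover by blast
  have la: "length a = N" and lb: "length b = N" and lv0: "length v0 = mu"
    using len ab(1) v0 by (auto simp: binary_cube_def)
  have "(a, b) \<in> retained mu v0 S" and y': "y \<in> box (drop mu a) (drop mu b)"
    using append_mem_box_iff_retained[OF ab(1) la lb \<open>mu \<le> N\<close> lv0] ab(2) by simp_all
  moreover have "z \<in> box (shift_lo mu a) (shift_hi mu b)"
    unfolding mem_box_shift_iff[OF lb[folded la] \<open>mu \<le> N\<close>[folded la]]
    using z y' u binary_cube_subset_box by blast
  ultimately show "z \<in> (\<Union>(a, b) \<in> retained mu v0 S. box (shift_lo mu a) (shift_hi mu b))"
    by blast
qed

lemma disjoint_family_on_retained_shift:
  assumes len: "\<forall>(a, b) \<in> S. length a = N \<and> length b = N" and "mu \<le> N"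
    and "length v0 = mu"
    and disj: "disjoint_family_on (\<lambda>(a, b). box a b) S"
  shows "disjoint_family_on (\<lambda>(a, b). box (shift_lo mu a) (shift_hi mu b)) (retained mu v0 S)"
proof -
  have lift: "v0 @ take (N - mu) z \<in> box a b"
    if ret: "(a, b) \<in> retained mu v0 S" and z: "z \<in> box (shift_lo mu a) (shift_hi mu b)"
    for a b z
  proof -
    have ab: "(a, b) \<in> S" using ret by (simp add: retained_def)
    then have la: "length a = N" and lb: "length b = N" using len by auto
    obtain y u where "z = y @ u" and y: "y \<in> box (drop mu a) (drop mu b)"
      using z mem_box_shift_iff[OF lb[folded la] \<open>mu \<le> N\<close>[folded la]] by blast
    moreover have "length y = N - mu" using y la by (simp add: box_def)
    ultimately show ?thesis
      using append_mem_box_iff_retained[OF ab la lb \<open>mu \<le> N\<close> \<open>length v0 = mu\<close>] ret by simp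
  qed
  show ?thesis
    unfolding disjoint_family_on_def
  proof (intro ballI impI equals0I)
    fix p q z
    assume "p \<in> retained mu v0 S" "q \<in> retained mu v0 S" "p \<noteq> q"
      and z: "z \<in> (\<lambda>(a, b). box (shift_lo mu a) (shift_hi mu b)) p \<inter>
        (\<lambda>(a, b). box (shift_lo mu a) (shift_hi mu b)) q"
    moreover obtain a b a' b' where "p = (a, b)" "q = (a', b')" by fastforce
    ultimately have "(a, b) \<in> S" "(a', b') \<in> S" "(a, b) \<noteq> (a', b')"
      and "v0 @ take (N - mu) z \<in> box a b \<inter> box a' b'"
      using lift by (auto simp: retained_def)
    then show False
      using disjoint_family_onD[OF disj] by fastforce
  qed
qed

lemma le_vec_shift: "le_vec a b \<Longrightarrow> le_vec (shift_lo mu a) (shift_hi mu b)"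
  by (simp add: le_vec_eq_list_all2 shift_lo_def shift_hi_def list_all2_appendI
      list_all2_conv_all_nth[of _ "replicate mu 0"])

theorem proposition1:
  fixes T mu :: nat
    and S :: "(real list \<times> real list) set"
    and v0 :: "real list"
  assumes "T \<ge> 1" and "mu \<ge> 1"
    and "finite S"
    and "\<forall>(a, b) \<in> S. length a = T * mu \<and> length b = T * mu \<and>
            set a \<subseteq> {0, 1} \<and> set b \<subseteq> {0, 1} \<and> le_vec a b"
    and "disjoint_family_on (\<lambda>(a, b). box a b) S"
    and "binary_cube (T * mu) \<subseteq> (\<Union>(a, b) \<in> S. box a b)"
    and "length v0 = mu" and "set v0 \<subseteq> {0, 1}"
  shows "binary_cube (T * mu) \<subseteq>
           (\<Union>(a, b) \<in> retained mu v0 S. box (shift_lo mu a) (shift_hi mu b)) \<and>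
         disjoint_family_on (\<lambda>(a, b). box (shift_lo mu a) (shift_hi mu b)) (retained mu v0 S) \<and>
         (\<forall>(a, b) \<in> retained mu v0 S.
           length (shift_lo mu a) = T * mu \<and> length (shift_hi mu b) = T * mu \<and>
           set (shift_lo mu a) \<subseteq> {0, 1} \<and> set (shift_hi mu b) \<subseteq> {0, 1} \<and>
           le_vec (shift_lo mu a) (shift_hi mu b))"
proof -
  have mu_le: "mu \<le> T * mu" using \<open>T \<ge> 1\<close> by simp
  have len: "\<forall>(a, b) \<in> S. length a = T * mu \<and> length b = T * mu" using assms(4) by auto
  have v0: "v0 \<in> binary_cube mu" using assms(7,8) by (simp add: binary_cube_def)
  have shifted: "length (shift_lo mu a) = T * mu \<and> length (shift_hi mu b) = T * mu \<and>
      set (shift_lo mu a) \<subseteq> {0, 1} \<and> set (shift_hi mu b) \<subseteq> {0, 1} \<and>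
      le_vec (shift_lo mu a) (shift_hi mu b)" if "(a, b) \<in> S" for a b
  proof -
    have "length a = T * mu" "length b = T * mu" "set a \<subseteq> {0, 1}" "set b \<subseteq> {0, 1}"
      "le_vec a b"
      using assms(4) that by auto
    then show ?thesis
      using le_vec_shift[of a b mu] mu_le set_drop_subset[of mu a] set_drop_subset[of mu b]
      unfolding shift_lo_def shift_hi_def by auto
  qed
  then show ?thesis
    using binary_cube_subset_UN_retained_shift[OF len mu_le assms(6) v0]
      disjoint_family_on_retained_shift[OF len mu_le assms(7,5)] shifted
    unfolding retained_def by blast
qed

end
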